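(* Let $(P_t)_{t\ge0}$ be a transition semigroup on a Polish space $\mathcal X$ (Feller and stochastically continuous). For all $k\ge1$ and $t_1,\dots,t_k>0$, \[\limsup_{T\to\infty}\sup_{\mu\in\mathcal M_1}\|Q^{T,t_k,\dots,t_1}\mu-Q^T\mu\|_{\mathrm{TV}}=0.\]
   Context: $\mathcal M_1$ is the set of Borel probability measures on $\mathcal X$, $P_t^*\mu(B)=\int P_t\mathbf 1_B\,d\mu$, $Q^T\mu:=T^{-1}\int_0^TP_s^*\mu\,ds$ for $T>0$, and $Q^{t_k,\dots,t_1}\mu:=Q^{t_k}\cdots Q^{t_1}\mu$, so $Q^{T,t_k,\dots,t_1}\mu=Q^TQ^{t_k}\cdots Q^{t_1}\mu$. $\|\cdot\|_{\mathrm{TV}}$ is the total variation norm. *)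

theory Defs
  imports "HOL-Probability.Probability"
begin

text \<open>A transition semigroup on a Polish space, given by its transition
probability kernels K t x = P_t(x, .), with P_t f x = integral of f w.r.t. K t x.\<close>

definition transition_semigroup :: "(real \<Rightarrow> 'a::polish_space \<Rightarrow> 'a measure) \<Rightarrow> bool" where
  "transition_semigroup K \<longleftrightarrow>
     (\<forall>t\<ge>0. K t \<in> borel \<rightarrow>\<^sub>M prob_algebra borel) \<and>
     (\<forall>x. K 0 x = return borel x) \<and>
     (\<forall>s\<ge>0. \<forall>t\<ge>0. \<forall>x. K (s + t) x = K s x \<bind> K t)"

definition feller :: "(real \<Rightarrow> 'a::polish_space \<Rightarrow> 'a measure) \<Rightarrow> bool" where
  "feller K \<longleftrightarrow> (\<forall>t\<ge>0. \<forall>f::'a \<Rightarrow> real. continuous_on UNIV f \<and> bounded (range f) \<longrightarrow>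
      continuous_on UNIV (\<lambda>x. \<integral>y. f y \<partial>(K t x)))"

definition stoch_continuous :: "(real \<Rightarrow> 'a::polish_space \<Rightarrow> 'a measure) \<Rightarrow> bool" where
  "stoch_continuous K \<longleftrightarrow> (\<forall>f::'a \<Rightarrow> real. \<forall>x. continuous_on UNIV f \<and> bounded (range f) \<longrightarrow>
      ((\<lambda>t. \<integral>y. f y \<partial>(K t x)) \<longlongrightarrow> f x) (at_right 0))"

definition M1 :: "'a::topological_space measure set" where
  "M1 = {\<mu>. prob_space \<mu> \<and> sets \<mu> = sets borel}"

definition Pstar :: "(real \<Rightarrow> 'a::polish_space \<Rightarrow> 'a measure) \<Rightarrow> real \<Rightarrow> 'a measure \<Rightarrow> 'a measure" where
  "Pstar K t \<mu> = \<mu> \<bind> K t"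

definition Qavg :: "(real \<Rightarrow> 'a::polish_space \<Rightarrow> 'a measure) \<Rightarrow> real \<Rightarrow> 'a measure \<Rightarrow> 'a measure" where
  "Qavg K T \<mu> = measure_of (space borel) (sets borel)
     (\<lambda>B. ennreal (1 / T) * (\<integral>\<^sup>+ s\<in>{0..T}. emeasure (Pstar K s \<mu>) B \<partial>lborel))"

text \<open>Q^{t_k,...,t_1} mu = Q^{t_k} ... Q^{t_1} mu, with ts = [t_1, ..., t_k] (t_1 applied first).\<close>
definition Qiter :: "(real \<Rightarrow> 'a::polish_space \<Rightarrow> 'a measure) \<Rightarrow> real list \<Rightarrow> 'a measure \<Rightarrow> 'a measure" where
  "Qiter K ts \<mu> = foldl (\<lambda>\<nu> t. Qavg K t \<nu>) \<mu> ts"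

text \<open>Total variation norm of the signed measure mu - nu (probability measures):
  |mu - nu|(X) = 2 sup_B |mu B - nu B|.\<close>
definition tv_norm :: "'a::topological_space measure \<Rightarrow> 'a measure \<Rightarrow> real" where
  "tv_norm \<mu> \<nu> = 2 * (SUP B\<in>sets borel. \<bar>measure \<mu> B - measure \<nu> B\<bar>)"

end

theory Submission
  imports Defs
begin

text \<open>Fix a Borel set \<open>B\<close> and put \<open>g(u) = P\<^sub>u\<^sup>*\<nu>(B) \<in> [0, 1]\<close>. By the semigroup property
  \<open>Q\<^sup>T Q\<^sup>t \<nu>(B) = (tT)\<^sup>-\<^sup>1 \<integral>\<^sub>0\<^sup>t \<integral>\<^sub>0\<^sup>T g(r + s) ds dr\<close>, and shifting the window \<open>[0, T]\<close> by \<open>r \<le> t\<close> changes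
  \<open>\<integral>\<^sub>0\<^sup>T g\<close> by at most \<open>t\<close>. Hence \<open>|Q\<^sup>T Q\<^sup>t \<nu>(B) - Q\<^sup>T \<nu>(B)| \<le> t/T\<close> uniformly in \<nu> and \<open>B\<close>, and
  telescoping along \<open>t\<^sub>1, \<dots>, t\<^sub>k\<close> bounds the total variation distance by \<open>2(t\<^sub>1 + \<dots> + t\<^sub>k)/T\<close>.
  Stochastic continuity makes \<open>u \<mapsto> P\<^sub>u\<^sup>*\<nu>\<close> right-continuous against bounded continuous functions,
  which is all that is needed for the measurability behind these integrals.\<close>

lemma nn_integral_indicator_shift:
  fixes g :: "real \<Rightarrow> ennreal"
  assumes [measurable]: "g \<in> borel_measurable borel"
  shows "(\<integral>\<^sup>+s. g (r + s) * indicator {0..T} s \<partial>lborel) = (\<integral>\<^sup>+u. g u * indicator {r..r+T} u \<partial>lborel)"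
proof -
  have "(\<integral>\<^sup>+u. g u * indicator {r..r+T} u \<partial>lborel) = (\<integral>\<^sup>+s. g (r + s) * indicator {r..r+T} (r + s) \<partial>lborel)"
    using nn_integral_real_affine[of "\<lambda>u. g u * indicator {r..r+T} u" 1 r] by simp
  also have "\<dots> = (\<integral>\<^sup>+s. g (r + s) * indicator {0..T} s \<partial>lborel)"
    by (intro nn_integral_cong) (auto simp: indicator_def)
  finally show ?thesis by simp
qed

lemma nn_integral_indicator_le_length:
  fixes g :: "real \<Rightarrow> ennreal"
  assumes "\<And>u. g u \<le> 1" and "a \<le> b"
  shows "(\<integral>\<^sup>+u. g u * indicator {a..b} u \<partial>lborel) \<le> ennreal (b - a)"
proof -
  have "(\<integral>\<^sup>+u. g u * indicator {a..b} u \<partial>lborel) \<le> (\<integral>\<^sup>+u. 1 * indicator {a..b} u \<partial>lborel)"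
    by (intro nn_integral_mono mult_right_mono assms) auto
  also have "\<dots> = ennreal (b - a)"
    using assms(2) by (subst nn_integral_cmult_indicator) auto
  finally show ?thesis .
qed

text \<open>The windows \<open>[0, T]\<close> and \<open>[r, r + T]\<close> differ by two intervals of length \<open>r\<close>.\<close>

lemma nn_integral_window_shift_le:
  fixes g :: "real \<Rightarrow> ennreal"
  assumes [measurable]: "g \<in> borel_measurable borel" and g1: "\<And>u. g u \<le> 1" and r: "r \<ge> 0"
  shows "(\<integral>\<^sup>+s. g (r + s) * indicator {0..T} s \<partial>lborel) \<le> (\<integral>\<^sup>+u. g u * indicator {0..T} u \<partial>lborel) + ennreal r"
    and "(\<integral>\<^sup>+u. g u * indicator {0..T} u \<partial>lborel) \<le> (\<integral>\<^sup>+s. g (r + s) * indicator {0..T} s \<partial>lborel) + ennreal r"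
proof -
  have "(\<integral>\<^sup>+u. g u * indicator {r..r+T} u \<partial>lborel)
      \<le> (\<integral>\<^sup>+u. g u * indicator {0..T} u + g u * indicator {T..T+r} u \<partial>lborel)"
    using r by (intro nn_integral_mono) (auto simp: indicator_def)
  also have "\<dots> = (\<integral>\<^sup>+u. g u * indicator {0..T} u \<partial>lborel) + (\<integral>\<^sup>+u. g u * indicator {T..T+r} u \<partial>lborel)"
    by (rule nn_integral_add) auto
  also have "\<dots> \<le> (\<integral>\<^sup>+u. g u * indicator {0..T} u \<partial>lborel) + ennreal r"
    using nn_integral_indicator_le_length[OF g1, of T "T+r"] r by (intro add_left_mono) auto
  finally show "(\<integral>\<^sup>+s. g (r + s) * indicator {0..T} s \<partial>lborel) \<le> (\<integral>\<^sup>+u. g u * indicator {0..T} u \<partial>lborel) + ennreal r"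
    by (simp add: nn_integral_indicator_shift)
  have "(\<integral>\<^sup>+u. g u * indicator {0..T} u \<partial>lborel)
      \<le> (\<integral>\<^sup>+u. g u * indicator {r..r+T} u + g u * indicator {0..r} u \<partial>lborel)"
    using r by (intro nn_integral_mono) (auto simp: indicator_def)
  also have "\<dots> = (\<integral>\<^sup>+u. g u * indicator {r..r+T} u \<partial>lborel) + (\<integral>\<^sup>+u. g u * indicator {0..r} u \<partial>lborel)"
    by (rule nn_integral_add) auto
  also have "\<dots> \<le> (\<integral>\<^sup>+u. g u * indicator {r..r+T} u \<partial>lborel) + ennreal r"
    using nn_integral_indicator_le_length[OF g1, of 0 r] r by (intro add_left_mono) auto
  finally show "(\<integral>\<^sup>+u. g u * indicator {0..T} u \<partial>lborel) \<le> (\<integral>\<^sup>+s. g (r + s) * indicator {0..T} s \<partial>lborel) + ennreal r"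
    by (simp add: nn_integral_indicator_shift)
qed

lemma nn_integral_averaged_window_shift_bounds:
  fixes g :: "real \<Rightarrow> ennreal" and t T :: real
  assumes [measurable]: "g \<in> borel_measurable borel" and g1: "\<And>u. g u \<le> 1" and t: "t > 0"
  defines "y \<equiv> \<integral>\<^sup>+u. g u * indicator {0..T} u \<partial>lborel"
    and "X \<equiv> \<integral>\<^sup>+s. (\<integral>\<^sup>+r. g (r + s) * indicator {0..t} r \<partial>lborel) * indicator {0..T} s \<partial>lborel"
  shows "X \<le> ennreal t * y + ennreal (t * t)" and "ennreal t * y \<le> X + ennreal (t * t)"
proof -
  define x where "x r = (\<integral>\<^sup>+s. g (r + s) * indicator {0..T} s \<partial>lborel)" for r
  have joint: "(\<lambda>(r, s). g (r + s) * indicator {0..t} r * indicator {0..T} s) \<in> borel_measurable (lborel \<Otimes>\<^sub>M lborel)"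
    by measurable
  have x_eq: "(\<integral>\<^sup>+s. g (r + s) * indicator {0..t} r * indicator {0..T} s \<partial>lborel) = indicator {0..t} r * x r" for r
    unfolding x_def by (subst nn_integral_cmult[symmetric]) (auto simp: ac_simps)
  have x_meas: "(\<lambda>r. indicator {0..t} r * x r) \<in> borel_measurable lborel"
    using lborel.borel_measurable_nn_integral[OF joint] by (simp add: x_eq)
  have "X = (\<integral>\<^sup>+s. \<integral>\<^sup>+r. g (r + s) * indicator {0..t} r * indicator {0..T} s \<partial>lborel \<partial>lborel)"
    unfolding X_def by (intro nn_integral_cong) (auto simp: nn_integral_multc)
  also have "\<dots> = (\<integral>\<^sup>+r. \<integral>\<^sup>+s. g (r + s) * indicator {0..t} r * indicator {0..T} s \<partial>lborel \<partial>lborel)"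
    by (rule lborel_pair.Fubini') (use joint in simp)
  finally have X: "X = (\<integral>\<^sup>+r. indicator {0..t} r * x r \<partial>lborel)"
    by (simp add: x_eq)
  have const: "(\<integral>\<^sup>+r. indicator {0..t} r * c \<partial>lborel) = ennreal t * c" for c
    using nn_integral_cmult_indicator[of "{0..t}" lborel c] t by (simp add: mult.commute)
  have "X \<le> (\<integral>\<^sup>+r. indicator {0..t} r * (y + ennreal t) \<partial>lborel)"
    unfolding X
  proof (intro nn_integral_mono)
    fix r show "indicator {0..t} r * x r \<le> indicator {0..t} r * (y + ennreal t)"
    proof (cases "r \<in> {0..t}")
      case True
      then have "x r \<le> y + ennreal r"
        using nn_integral_window_shift_le(1)[OF assms(1) g1, of r T] by (simp add: x_def y_def)
      also have "\<dots> \<le> y + ennreal t" using True by (intro add_left_mono ennreal_leI) auto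
      finally show ?thesis by (intro mult_left_mono) auto
    qed simp
  qed
  also have "\<dots> = ennreal t * y + ennreal (t * t)"
    unfolding const using t by (simp add: distrib_left ennreal_mult)
  finally show "X \<le> ennreal t * y + ennreal (t * t)" .
  have "ennreal t * y = (\<integral>\<^sup>+r. indicator {0..t} r * y \<partial>lborel)" by (simp add: const)
  also have "\<dots> \<le> (\<integral>\<^sup>+r. indicator {0..t} r * x r + indicator {0..t} r * ennreal t \<partial>lborel)"
  proof (intro nn_integral_mono)
    fix r show "indicator {0..t} r * y \<le> indicator {0..t} r * x r + indicator {0..t} r * ennreal t"
    proof (cases "r \<in> {0..t}")
      case True
      then have "y \<le> x r + ennreal r"
        using nn_integral_window_shift_le(2)[OF assms(1) g1, of r T] by (simp add: x_def y_def)
      also have "\<dots> \<le> x r + ennreal t" using True by (intro add_left_mono ennreal_leI) auto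
      finally show ?thesis using True by simp
    qed simp
  qed
  also have "\<dots> = X + (\<integral>\<^sup>+r. indicator {0..t} r * ennreal t \<partial>lborel)"
    unfolding X by (rule nn_integral_add) (use x_meas in auto)
  also have "\<dots> = X + ennreal (t * t)" unfolding const using t by (simp add: ennreal_mult)
  finally show "ennreal t * y \<le> X + ennreal (t * t)" .
qed

lemma averaged_window_shift_close:
  fixes g :: "real \<Rightarrow> ennreal" and t T :: real
  assumes g: "g \<in> borel_measurable borel" and g1: "\<And>u. g u \<le> 1" and t: "t > 0" and T: "T \<ge> 0"
  defines "y \<equiv> \<integral>\<^sup>+u. g u * indicator {0..T} u \<partial>lborel"
    and "X \<equiv> \<integral>\<^sup>+s. (\<integral>\<^sup>+r. g (r + s) * indicator {0..t} r \<partial>lborel) * indicator {0..T} s \<partial>lborel"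
  shows "\<bar>enn2real X / t - enn2real y\<bar> \<le> t"
proof -
  note bounds = nn_integral_averaged_window_shift_bounds[OF g g1 t, of T, folded X_def y_def]
  have "y < top"
    using nn_integral_indicator_le_length[of g 0 T, OF g1 T] by (simp add: y_def le_less_trans)
  moreover have "X < top"
    using bounds(1) \<open>y < top\<close> by (simp add: le_less_trans ennreal_mult_less_top)
  ultimately obtain Xr yr where X: "X = ennreal Xr" "Xr \<ge> 0" and y: "y = ennreal yr" "yr \<ge> 0"
    by (metis enn2real_nonneg ennreal_enn2real less_top)
  have "ennreal Xr \<le> ennreal (t * yr + t * t)"
    using bounds(1) t X y by (simp add: ennreal_mult ennreal_plus)
  then have upper: "Xr \<le> t * yr + t * t"
    using t y by (subst (asm) ennreal_le_iff) auto
  have "ennreal (t * yr) \<le> ennreal (Xr + t * t)"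
    using bounds(2) t X y by (simp add: ennreal_mult ennreal_plus)
  then have lower: "t * yr \<le> Xr + t * t"
    using t X by (subst (asm) ennreal_le_iff) auto
  from upper lower have "\<bar>Xr - t * yr\<bar> \<le> t * t" by linarith
  then have "\<bar>Xr / t - yr\<bar> \<le> t"
    using t by (simp add: abs_le_iff field_simps)
  then show ?thesis using X y by simp
qed

lemma borel_measurable_right_continuous:
  fixes f :: "real \<Rightarrow> real"
  assumes right_cont: "\<And>u. continuous (at u within {u..}) f"
  shows "f \<in> borel_measurable borel"
proof -
  define v where "v n u = real_of_int \<lceil>real (Suc n) * u\<rceil> / real (Suc n)" for n u
  have v_ge: "v n u \<ge> u" for n u
    using le_of_int_ceiling[of "real (Suc n) * u"] by (simp add: v_def field_simps)
  have v_le: "v n u \<le> u + inverse (real (Suc n))" for n u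
  proof -
    have "v n u \<le> (real (Suc n) * u + 1) / real (Suc n)"
      unfolding v_def by (intro divide_right_mono of_int_ceiling_le_add_one) auto
    also have "\<dots> = u + inverse (real (Suc n))"
      by (simp add: field_simps del: of_nat_Suc)
    finally show ?thesis .
  qed
  show ?thesis
  proof (rule borel_measurable_LIMSEQ_real[where u="\<lambda>n u. f (v n u)"])
    fix u :: real
    have "(\<lambda>n. v n u) \<longlonglongrightarrow> u"
    proof (rule tendsto_sandwich[where f="\<lambda>n. u" and h="\<lambda>n. u + inverse (real (Suc n))"])
      show "eventually (\<lambda>n. u \<le> v n u) sequentially"
        using v_ge by simp
      show "eventually (\<lambda>n. v n u \<le> u + inverse (real (Suc n))) sequentially"
        using v_le by simp
      show "(\<lambda>n. u + inverse (real (Suc n))) \<longlonglongrightarrow> u"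
        using tendsto_add[OF tendsto_const LIMSEQ_inverse_real_of_nat, of u] by simp
    qed simp
    then show "(\<lambda>n. f (v n u)) \<longlonglongrightarrow> f u"
      using right_cont[of u] v_ge unfolding continuous_within_sequentially by (auto simp: comp_def)
  next
    fix n
    have "(\<lambda>u. (\<lambda>z::int. f (real_of_int z / real (Suc n))) \<lceil>real (Suc n) * u\<rceil>) \<in> borel_measurable borel"
      by (rule measurable_compose_countable[where f="\<lambda>z u. f (real_of_int z / real (Suc n))"]) measurable
    then show "(\<lambda>u. f (v n u)) \<in> borel_measurable borel"
      by (simp add: v_def)
  qed
qed

lemma continuous_approximation_indicator_open:
  fixes U :: "'a::metric_space set"
  assumes "open U"
  obtains f :: "nat \<Rightarrow> 'a \<Rightarrow> real"
  where "\<And>n. continuous_on UNIV (f n)" "\<And>n x. \<bar>f n x\<bar> \<le> 1" "\<And>x. (\<lambda>n. f n x) \<longlonglongrightarrow> indicator U x"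
proof (cases "U = UNIV")
  case True
  then show ?thesis by (intro that[of "\<lambda>_ _. 1"]) auto
next
  case False
  define f where "f n x = min 1 (real n * infdist x (- U))" for n x
  have cont: "continuous_on UNIV (f n)" for n
    unfolding f_def by (intro continuous_intros continuous_on_infdist continuous_on_id)
  have bdd: "\<bar>f n x\<bar> \<le> 1" for n x
    using infdist_nonneg[of x "- U"] by (auto simp: f_def)
  have "(\<lambda>n. f n x) \<longlonglongrightarrow> indicator U x" for x
  proof (cases "x \<in> U")
    case True
    have d: "infdist x (- U) > 0"
      using infdist_pos_not_in_closed[of "- U" x] assms False True by auto
    obtain N where N: "1 < real N * infdist x (- U)"
      using ex_less_of_nat_mult[OF d] by blast
    have "f n x = indicator U x" if "N \<le> n" for n
    proof -
      have "real N * infdist x (- U) \<le> real n * infdist x (- U)"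
        using that d by (intro mult_right_mono) auto
      then show ?thesis using N True by (simp add: f_def)
    qed
    then show ?thesis
      by (intro tendsto_eventually) (auto simp: eventually_sequentially)
  qed (simp add: f_def)
  then show ?thesis by (rule that[OF cont bdd])
qed

lemma abs_integral_prob_le:
  fixes f :: "'b \<Rightarrow> real"
  assumes "prob_space M" "f \<in> borel_measurable M" "\<And>x. \<bar>f x\<bar> \<le> C"
  shows "\<bar>\<integral>x. f x \<partial>M\<bar> \<le> C"
proof -
  interpret prob_space M by fact
  have f: "integrable M f" using assms by (intro integrable_const_bound[where B=C]) auto
  have "(\<integral>x. f x \<partial>M) \<le> C"
    using assms(3) by (intro integral_le_const[OF f]) (auto simp: abs_le_iff)
  moreover have "- C \<le> (\<integral>x. f x \<partial>M)"
    using assms(3) by (intro integral_ge_const[OF f]) (simp add: abs_le_iff minus_le_iff)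
  ultimately show ?thesis by auto
qed

lemma tv_norm_le:
  assumes "\<And>B. B \<in> sets borel \<Longrightarrow> \<bar>measure M B - measure N B\<bar> \<le> c"
  shows "tv_norm M N \<le> 2 * c"
proof -
  have "(SUP B\<in>sets borel. \<bar>measure M B - measure N B\<bar>) \<le> c"
    using assms by (intro cSUP_least) auto
  then show ?thesis by (simp add: tv_norm_def)
qed

lemma tv_norm_nonneg:
  assumes "\<And>B. B \<in> sets borel \<Longrightarrow> \<bar>measure M B - measure N B\<bar> \<le> c"
  shows "0 \<le> tv_norm M N"
proof -
  have "bdd_above ((\<lambda>B. \<bar>measure M B - measure N B\<bar>) ` sets borel)"
    using assms by (intro bdd_aboveI2)
  then have "0 \<le> (SUP B\<in>sets borel. \<bar>measure M B - measure N B\<bar>)"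
    by (intro cSUP_upper2[where x="{}"]) auto
  then show ?thesis by (simp add: tv_norm_def)
qed

lemma uniform_measure_interval_in_M1:
  fixes T :: real
  assumes "T > 0"
  shows "uniform_measure lborel {0..T} \<in> M1"
  using assms by (auto simp: M1_def intro!: prob_space_uniform_measure)

lemma enn2real_divide_ennreal: "0 < c \<Longrightarrow> enn2real (a / ennreal c) = enn2real a / c"
  by (simp add: divide_ennreal_def inverse_ennreal enn2real_mult divide_real_def)

lemma
  assumes "\<nu> \<in> M1"
  shows prob_space_M1: "prob_space \<nu>" and sets_M1: "sets \<nu> = sets borel"
    and M1_in_prob_algebra: "\<nu> \<in> space (prob_algebra borel)"
  using assms by (auto simp: M1_def space_prob_algebra)

lemma bind_in_M1:
  assumes "\<nu> \<in> M1" and "L \<in> borel \<rightarrow>\<^sub>M prob_algebra borel"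
  shows "\<nu> \<bind> L \<in> M1"
  using prob_space_bind'[OF M1_in_prob_algebra[OF assms(1)] assms(2)]
    sets_bind'[OF M1_in_prob_algebra[OF assms(1)] assms(2)]
  by (simp add: M1_def)

locale markov_semigroup =
  fixes K :: "real \<Rightarrow> 'a::polish_space \<Rightarrow> 'a measure"
  assumes semigroup: "transition_semigroup K" and stoch_cont: "stoch_continuous K"
begin

lemma measurable_kernel: "t \<ge> 0 \<Longrightarrow> K t \<in> borel \<rightarrow>\<^sub>M prob_algebra borel"
  using semigroup by (auto simp: transition_semigroup_def)

lemma measurable_kernel_subprob: "t \<ge> 0 \<Longrightarrow> K t \<in> borel \<rightarrow>\<^sub>M subprob_algebra borel"
  using measurable_kernel measurable_prob_algebraD by blast

lemma
  assumes "t \<ge> 0"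
  shows prob_space_kernel: "prob_space (K t x)" and sets_kernel: "sets (K t x) = sets borel"
  using measurable_space[OF measurable_kernel[OF assms], of x] by (auto simp: space_prob_algebra)

lemma bind_kernel_in_M1: "\<nu> \<in> M1 \<Longrightarrow> t \<ge> 0 \<Longrightarrow> \<nu> \<bind> K t \<in> M1"
  by (rule bind_in_M1[OF _ measurable_kernel])

lemma bind_kernel_assoc:
  assumes "\<nu> \<in> M1" "s \<ge> 0" "t \<ge> 0"
  shows "\<nu> \<bind> K s \<bind> K t = \<nu> \<bind> K (s + t)"
proof -
  have "\<nu> \<bind> K s \<bind> K t = \<nu> \<bind> (\<lambda>x. K s x \<bind> K t)"
    using measurable_kernel_subprob[OF assms(2)] measurable_kernel_subprob[OF assms(3)] sets_M1[OF assms(1)]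
    by (intro bind_assoc) (auto cong: measurable_cong_sets)
  also have "(\<lambda>x. K s x \<bind> K t) = K (s + t)"
    using semigroup assms(2,3) by (auto simp: transition_semigroup_def)
  finally show ?thesis .
qed

lemma integral_bind_kernel:
  fixes f :: "'a \<Rightarrow> real"
  assumes "\<nu> \<in> M1" "t \<ge> 0" "f \<in> borel_measurable borel" "\<And>x. \<bar>f x\<bar> \<le> C"
  shows "(\<integral>y. f y \<partial>(\<nu> \<bind> K t)) = (\<integral>x. (\<integral>y. f y \<partial>K t x) \<partial>\<nu>)"
proof (rule integral_bind[where K=borel and B=C and B'=1])
  show "K t \<in> \<nu> \<rightarrow>\<^sub>M subprob_algebra borel"
    using measurable_kernel_subprob[OF assms(2)] sets_M1[OF assms(1)] by (auto cong: measurable_cong_sets)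
  show "finite_measure \<nu>"
    using prob_space_M1[OF assms(1)] by (auto simp: prob_space_def)
  show "AE x in \<nu>. emeasure (K t x) (space (K t x)) \<le> ennreal 1"
    using prob_space_kernel[OF assms(2)] by (simp add: prob_space.emeasure_space_1)
qed (use assms in auto)

lemma borel_measurable_integral_kernel:
  fixes f :: "'a \<Rightarrow> real"
  assumes "t \<ge> 0" and "f \<in> borel_measurable borel"
  shows "(\<lambda>x. \<integral>y. f y \<partial>K t x) \<in> borel_measurable borel"
proof -
  have "(\<lambda>M. integral\<^sup>L M f) \<in> subprob_algebra borel \<rightarrow>\<^sub>M borel"
    using assms(2) by measurable
  from measurable_comp[OF measurable_kernel_subprob[OF assms(1)] this] show ?thesis
    by (simp add: comp_def)
qed

lemma integral_kernel_0:
  fixes f :: "'a \<Rightarrow> real"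
  assumes "f \<in> borel_measurable borel"
  shows "(\<integral>z. f z \<partial>K 0 y) = f y"
  using semigroup assms by (simp add: transition_semigroup_def integral_return)

lemma continuous_integral_kernel_at_0:
  fixes f :: "'a \<Rightarrow> real"
  assumes "continuous_on UNIV f" and "bounded (range f)"
  shows "continuous (at 0 within {0..}) (\<lambda>t. \<integral>z. f z \<partial>K t y)"
  using stoch_cont assms integral_kernel_0[OF borel_measurable_continuous_onI[OF assms(1)]]
  by (simp add: stoch_continuous_def continuous_within at_within_Ici_at_right)

lemma continuous_integral_bind_kernel:
  fixes f :: "'a \<Rightarrow> real"
  assumes \<nu>: "\<nu> \<in> M1" and p: "p \<ge> 0" and f: "continuous_on UNIV f" "\<And>x. \<bar>f x\<bar> \<le> C"
  shows "continuous (at p within {p..}) (\<lambda>t. \<integral>y. f y \<partial>(\<nu> \<bind> K t))"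
  unfolding continuous_within_sequentially comp_def
proof (intro allI impI, elim conjE)
  fix s :: "nat \<Rightarrow> real"
  assume s: "\<forall>n. s n \<in> {p..}" and lim: "s \<longlonglongrightarrow> p"
  define h where "h n = s n - p" for n
  have h: "h n \<in> {0..}" for n using s by (simp add: h_def)
  have "h \<longlonglongrightarrow> 0"
    using tendsto_diff[OF lim tendsto_const[of p]] by (simp add: h_def[abs_def])
  have f_meas: "f \<in> borel_measurable borel" using f(1) by (rule borel_measurable_continuous_onI)
  have f_bdd: "bounded (range f)" using f(2) by (auto simp: bounded_iff)
  define \<mu> where "\<mu> = \<nu> \<bind> K p"
  have \<mu>: "\<mu> \<in> M1" unfolding \<mu>_def using bind_kernel_in_M1[OF \<nu> p] .
  have "(\<integral>y. f y \<partial>(\<nu> \<bind> K (s n))) = (\<integral>x. (\<integral>y. f y \<partial>K (h n) x) \<partial>\<mu>)" for n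
    using bind_kernel_assoc[OF \<nu> p, of "h n"] integral_bind_kernel[OF \<mu> _ f_meas f(2), of "h n"] h[of n]
    by (simp add: \<mu>_def h_def)
  moreover have "(\<lambda>n. \<integral>x. (\<integral>y. f y \<partial>K (h n) x) \<partial>\<mu>) \<longlonglongrightarrow> (\<integral>x. f x \<partial>\<mu>)"
  proof (rule integral_dominated_convergence[where w="\<lambda>_. C"])
    show "f \<in> borel_measurable \<mu>"
      using f_meas sets_M1[OF \<mu>] by (simp cong: measurable_cong_sets)
    show "(\<lambda>x. \<integral>y. f y \<partial>K (h n) x) \<in> borel_measurable \<mu>" for n
      using borel_measurable_integral_kernel[OF _ f_meas] h[of n] sets_M1[OF \<mu>]
      by (simp cong: measurable_cong_sets)
    show "integrable \<mu> (\<lambda>_. C)"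
      using prob_space_M1[OF \<mu>] by (auto simp: prob_space_def intro: finite_measure.integrable_const)
    show "AE x in \<mu>. (\<lambda>n. \<integral>y. f y \<partial>K (h n) x) \<longlonglongrightarrow> f x"
    proof (rule AE_I2)
      fix x
      have "(\<lambda>n. \<integral>y. f y \<partial>K (h n) x) \<longlonglongrightarrow> (\<integral>y. f y \<partial>K 0 x)"
        using continuous_integral_kernel_at_0[OF f(1) f_bdd, of x] h \<open>h \<longlonglongrightarrow> 0\<close>
        unfolding continuous_within_sequentially by (auto simp: comp_def)
      then show "(\<lambda>n. \<integral>y. f y \<partial>K (h n) x) \<longlonglongrightarrow> f x"
        using integral_kernel_0[OF f_meas] by simp
    qed
    show "AE x in \<mu>. norm (\<integral>y. f y \<partial>K (h n) x) \<le> C" for n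
      using abs_integral_prob_le[OF prob_space_kernel _ f(2)] f_meas sets_kernel h[of n]
      by (simp cong: measurable_cong_sets)
  qed
  ultimately show "(\<lambda>n. \<integral>y. f y \<partial>(\<nu> \<bind> K (s n))) \<longlonglongrightarrow> (\<integral>y. f y \<partial>(\<nu> \<bind> K p))"
    by (simp add: \<mu>_def)
qed

text \<open>The path \<open>u \<mapsto> P\<^sub>u\<^sup>*\<nu>\<close>, continued by \<open>\<nu>\<close> on negative times so that it is a kernel on all of \<open>lborel\<close>.\<close>

definition orbit :: "'a measure \<Rightarrow> real \<Rightarrow> 'a measure" where
  "orbit \<nu> u = \<nu> \<bind> K (max 0 u)"

lemma orbit_in_M1: "\<nu> \<in> M1 \<Longrightarrow> orbit \<nu> u \<in> M1"
  unfolding orbit_def by (rule bind_kernel_in_M1) auto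

lemma borel_measurable_integral_orbit:
  fixes f :: "'a \<Rightarrow> real"
  assumes \<nu>: "\<nu> \<in> M1" and f: "continuous_on UNIV f" "\<And>x. \<bar>f x\<bar> \<le> C"
  shows "(\<lambda>u. \<integral>y. f y \<partial>orbit \<nu> u) \<in> borel_measurable borel"
proof (rule borel_measurable_right_continuous)
  fix u :: real
  have "continuous (at (max 0 u) within {max 0 u..}) (\<lambda>t. \<integral>y. f y \<partial>(\<nu> \<bind> K t))"
    by (rule continuous_integral_bind_kernel[OF \<nu> _ f]) simp
  then have "continuous (at (max 0 u) within max 0 ` {u..}) (\<lambda>t. \<integral>y. f y \<partial>(\<nu> \<bind> K t))"
    by (rule continuous_within_subset) auto
  then have "continuous (at u within {u..}) ((\<lambda>t. \<integral>y. f y \<partial>(\<nu> \<bind> K t)) \<circ> max 0)"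
    by (intro continuous_within_compose continuous_intros)
  then show "continuous (at u within {u..}) (\<lambda>u. \<integral>y. f y \<partial>orbit \<nu> u)"
    by (simp add: orbit_def comp_def)
qed

lemma borel_measurable_emeasure_orbit_open:
  assumes \<nu>: "\<nu> \<in> M1" and U: "open U"
  shows "(\<lambda>u. emeasure (orbit \<nu> u) U) \<in> borel_measurable borel"
proof -
  obtain f :: "nat \<Rightarrow> 'a \<Rightarrow> real" where f: "\<And>n. continuous_on UNIV (f n)" "\<And>n x. \<bar>f n x\<bar> \<le> 1"
    and lim: "\<And>x. (\<lambda>n. f n x) \<longlonglongrightarrow> indicator U x"
    using continuous_approximation_indicator_open[OF U] by blast
  have "(\<lambda>u. measure (orbit \<nu> u) U) \<in> borel_measurable borel"
  proof (rule borel_measurable_LIMSEQ_real)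
    show "(\<lambda>u. \<integral>y. f n y \<partial>orbit \<nu> u) \<in> borel_measurable borel" for n
      by (rule borel_measurable_integral_orbit[OF \<nu> f(1,2)])
    fix u
    note orbit = orbit_in_M1[OF \<nu>, of u]
    have "(\<lambda>n. \<integral>y. f n y \<partial>orbit \<nu> u) \<longlonglongrightarrow> (\<integral>y. indicator U y \<partial>orbit \<nu> u)"
    proof (rule integral_dominated_convergence[where w="\<lambda>_. 1"])
      show "indicator U \<in> borel_measurable (orbit \<nu> u)"
        using U sets_M1[OF orbit] by (simp cong: measurable_cong_sets)
      show "f n \<in> borel_measurable (orbit \<nu> u)" for n
        using borel_measurable_continuous_onI[OF f(1)] sets_M1[OF orbit] by (simp cong: measurable_cong_sets)
      show "integrable (orbit \<nu> u) (\<lambda>_. 1)"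
        using prob_space_M1[OF orbit] by (auto simp: prob_space_def intro: finite_measure.integrable_const)
    qed (use lim f(2) in auto)
    then show "(\<lambda>n. \<integral>y. f n y \<partial>orbit \<nu> u) \<longlonglongrightarrow> measure (orbit \<nu> u) U"
      using U sets_M1[OF orbit] by simp
  qed
  moreover have "emeasure (orbit \<nu> u) U = ennreal (measure (orbit \<nu> u) U)" for u
    using prob_space_M1[OF orbit_in_M1[OF \<nu>]] by (simp add: finite_measure.emeasure_eq_measure prob_space_def)
  ultimately show ?thesis by simp
qed

lemma measurable_orbit:
  assumes \<nu>: "\<nu> \<in> M1"
  shows "orbit \<nu> \<in> borel \<rightarrow>\<^sub>M prob_algebra borel"
proof (rule measurable_prob_algebra_generated[where \<Omega>=UNIV and G="{S. open S}"])
  show "sets borel = sigma_sets UNIV {S :: 'a set. open S}" by (rule sets_borel)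
  show "Int_stable {S :: 'a set. open S}" by (auto simp: Int_stable_def)
qed (use prob_space_M1 sets_M1 orbit_in_M1[OF \<nu>] borel_measurable_emeasure_orbit_open[OF \<nu>] in auto)

lemma borel_measurable_emeasure_orbit:
  "\<nu> \<in> M1 \<Longrightarrow> B \<in> sets borel \<Longrightarrow> (\<lambda>u. emeasure (orbit \<nu> u) B) \<in> borel_measurable borel"
  using measurable_compose[OF measurable_prob_algebraD[OF measurable_orbit] measurable_emeasure_subprob_algebra] .

lemma Qavg_eq_bind_orbit:
  assumes \<nu>: "\<nu> \<in> M1" and T: "T > 0"
  shows "Qavg K T \<nu> = uniform_measure lborel {0..T} \<bind> orbit \<nu>"
proof -
  let ?U = "uniform_measure lborel {0..T}"
  note U = M1_in_prob_algebra[OF uniform_measure_interval_in_M1[OF T]]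
  have sets: "sets (?U \<bind> orbit \<nu>) = sets borel"
    by (rule sets_bind'[OF U measurable_orbit[OF \<nu>]])
  have "?U \<bind> orbit \<nu> = measure_of UNIV (sets borel) (emeasure (?U \<bind> orbit \<nu>))"
    using measure_of_of_measure[of "?U \<bind> orbit \<nu>"] sets sets_eq_imp_space_eq[OF sets] by simp
  also have "\<dots> = Qavg K T \<nu>"
    unfolding Qavg_def space_borel
  proof (rule measure_of_eq)
    fix B :: "'a set"
    assume "B \<in> sigma_sets UNIV (sets borel)"
    then have B: "B \<in> sets borel" by (metis sets.sigma_sets_eq space_borel)
    have "emeasure (?U \<bind> orbit \<nu>) B = (\<integral>\<^sup>+u. emeasure (orbit \<nu> u) B \<partial>?U)"
      by (rule emeasure_bind_prob_algebra[OF U measurable_orbit[OF \<nu>] B])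
    also have "\<dots> = (\<integral>\<^sup>+u. emeasure (orbit \<nu> u) B * indicator {0..T} u \<partial>lborel) / ennreal T"
      using borel_measurable_emeasure_orbit[OF \<nu> B] T by (subst nn_integral_uniform_measure) auto
    also have "(\<integral>\<^sup>+u. emeasure (orbit \<nu> u) B * indicator {0..T} u \<partial>lborel)
        = (\<integral>\<^sup>+s. emeasure (Pstar K s \<nu>) B * indicator {0..T} s \<partial>lborel)"
      by (rule nn_integral_cong) (auto simp: Pstar_def orbit_def indicator_def)
    finally show "emeasure (?U \<bind> orbit \<nu>) B = ennreal (1 / T) * (\<integral>\<^sup>+s\<in>{0..T}. emeasure (Pstar K s \<nu>) B \<partial>lborel)"
      using T by (simp add: divide_ennreal_def inverse_ennreal mult.commute inverse_eq_divide)
  qed auto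
  finally show ?thesis by simp
qed

lemma Qavg_in_M1: "\<nu> \<in> M1 \<Longrightarrow> T > 0 \<Longrightarrow> Qavg K T \<nu> \<in> M1"
  using bind_in_M1[OF uniform_measure_interval_in_M1 measurable_orbit] by (simp add: Qavg_eq_bind_orbit)

lemma emeasure_Qavg:
  assumes \<nu>: "\<nu> \<in> M1" and T: "T > 0" and B: "B \<in> sets borel"
  shows "emeasure (Qavg K T \<nu>) B = (\<integral>\<^sup>+u. emeasure (orbit \<nu> u) B * indicator {0..T} u \<partial>lborel) / ennreal T"
proof -
  have "emeasure (Qavg K T \<nu>) B = (\<integral>\<^sup>+u. emeasure (orbit \<nu> u) B \<partial>uniform_measure lborel {0..T})"
    unfolding Qavg_eq_bind_orbit[OF \<nu> T]
    by (rule emeasure_bind_prob_algebra[OF M1_in_prob_algebra[OF uniform_measure_interval_in_M1[OF T]] measurable_orbit[OF \<nu>] B])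
  also have "\<dots> = (\<integral>\<^sup>+u. emeasure (orbit \<nu> u) B * indicator {0..T} u \<partial>lborel) / ennreal T"
    using borel_measurable_emeasure_orbit[OF \<nu> B] T by (subst nn_integral_uniform_measure) auto
  finally show ?thesis .
qed

lemma emeasure_bind_kernel_Qavg:
  assumes \<nu>: "\<nu> \<in> M1" and t: "t > 0" and s: "s \<ge> 0" and B: "B \<in> sets borel"
  shows "emeasure (Qavg K t \<nu> \<bind> K s) B = (\<integral>\<^sup>+r. emeasure (orbit \<nu> (r + s)) B * indicator {0..t} r \<partial>lborel) / ennreal t"
proof -
  let ?U = "uniform_measure lborel {0..t}"
  have kernel_B: "(\<lambda>x. emeasure (K s x) B) \<in> borel_measurable borel"
    using measurable_compose[OF measurable_kernel_subprob[OF s] measurable_emeasure_subprob_algebra[OF B]] .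
  have "emeasure (Qavg K t \<nu> \<bind> K s) B = (\<integral>\<^sup>+x. emeasure (K s x) B \<partial>Qavg K t \<nu>)"
    by (rule emeasure_bind_prob_algebra[OF M1_in_prob_algebra[OF Qavg_in_M1[OF \<nu> t]] measurable_kernel[OF s] B])
  also have "\<dots> = (\<integral>\<^sup>+r. \<integral>\<^sup>+x. emeasure (K s x) B \<partial>orbit \<nu> r \<partial>?U)"
    unfolding Qavg_eq_bind_orbit[OF \<nu> t]
    by (rule nn_integral_bind[OF kernel_B])
      (use measurable_prob_algebraD[OF measurable_orbit[OF \<nu>]] in \<open>simp cong: measurable_cong_sets\<close>)
  also have "\<dots> = (\<integral>\<^sup>+r. emeasure (orbit \<nu> (max 0 r + s)) B \<partial>?U)"
  proof (rule nn_integral_cong)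
    fix r :: real
    have "(\<integral>\<^sup>+x. emeasure (K s x) B \<partial>orbit \<nu> r) = emeasure (orbit \<nu> r \<bind> K s) B"
      by (rule emeasure_bind_prob_algebra[OF M1_in_prob_algebra[OF orbit_in_M1[OF \<nu>]] measurable_kernel[OF s] B, symmetric])
    also have "orbit \<nu> r \<bind> K s = orbit \<nu> (max 0 r + s)"
      using bind_kernel_assoc[OF \<nu> _ s, of "max 0 r"] s by (simp add: orbit_def)
    finally show "(\<integral>\<^sup>+x. emeasure (K s x) B \<partial>orbit \<nu> r) = emeasure (orbit \<nu> (max 0 r + s)) B" .
  qed
  also have "\<dots> = (\<integral>\<^sup>+r. emeasure (orbit \<nu> (max 0 r + s)) B * indicator {0..t} r \<partial>lborel) / ennreal t"
    using measurable_compose[of "\<lambda>r. max 0 r + s" lborel borel, OF _ borel_measurable_emeasure_orbit[OF \<nu> B]] t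
    by (subst nn_integral_uniform_measure) auto
  also have "(\<integral>\<^sup>+r. emeasure (orbit \<nu> (max 0 r + s)) B * indicator {0..t} r \<partial>lborel)
      = (\<integral>\<^sup>+r. emeasure (orbit \<nu> (r + s)) B * indicator {0..t} r \<partial>lborel)"
    by (rule nn_integral_cong) (auto simp: indicator_def)
  finally show ?thesis .
qed

lemma measure_Qavg_Qavg_diff_le:
  assumes \<nu>: "\<nu> \<in> M1" and t: "t > 0" and T: "T > 0" and B: "B \<in> sets borel"
  shows "\<bar>measure (Qavg K T (Qavg K t \<nu>)) B - measure (Qavg K T \<nu>) B\<bar> \<le> t / T"
proof -
  define g where "g u = emeasure (orbit \<nu> u) B" for u
  have g_meas[measurable]: "g \<in> borel_measurable borel"
    unfolding g_def by (rule borel_measurable_emeasure_orbit[OF \<nu> B])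
  have g_le_1: "g u \<le> 1" for u
    unfolding g_def using prob_space_M1[OF orbit_in_M1[OF \<nu>]] by (rule prob_space.emeasure_le_1)
  define y where "y = (\<integral>\<^sup>+u. g u * indicator {0..T} u \<partial>lborel)"
  define X where "X = (\<integral>\<^sup>+s. (\<integral>\<^sup>+r. g (r + s) * indicator {0..t} r \<partial>lborel) * indicator {0..T} s \<partial>lborel)"
  have "emeasure (Qavg K T (Qavg K t \<nu>)) B
      = (\<integral>\<^sup>+s. (\<integral>\<^sup>+r. g (r + s) * indicator {0..t} r \<partial>lborel) * indicator {0..T} s / ennreal t \<partial>lborel) / ennreal T"
    unfolding emeasure_Qavg[OF Qavg_in_M1[OF \<nu> t] T B]
  proof (intro arg_cong2[where f="(/)"] nn_integral_cong refl)
    fix s :: real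
    show "emeasure (orbit (Qavg K t \<nu>) s) B * indicator {0..T} s
        = (\<integral>\<^sup>+r. g (r + s) * indicator {0..t} r \<partial>lborel) * indicator {0..T} s / ennreal t"
      using emeasure_bind_kernel_Qavg[OF \<nu> t _ B, of s]
      by (cases "s \<ge> 0") (simp_all add: orbit_def g_def ennreal_times_divide mult.commute)
  qed
  also have "\<dots> = X / ennreal t / ennreal T"
    unfolding X_def by (subst nn_integral_divide) auto
  finally have QQ: "measure (Qavg K T (Qavg K t \<nu>)) B = enn2real X / t / T"
    using t T by (simp add: measure_def enn2real_divide_ennreal)
  have Q: "measure (Qavg K T \<nu>) B = enn2real y / T"
    using T by (simp add: measure_def emeasure_Qavg[OF \<nu> T B] enn2real_divide_ennreal y_def g_def)
  have "\<bar>enn2real X / t / T - enn2real y / T\<bar> = \<bar>enn2real X / t - enn2real y\<bar> / T"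
    using T by (simp only: diff_divide_distrib[symmetric] abs_divide)
  also have "\<dots> \<le> t / T"
    unfolding X_def y_def using T
    by (intro divide_right_mono averaged_window_shift_close[OF g_meas g_le_1 t]) simp_all
  finally show ?thesis unfolding QQ Q .
qed

lemma Qiter_in_M1: "\<nu> \<in> M1 \<Longrightarrow> \<forall>t\<in>set ts. t > 0 \<Longrightarrow> Qiter K ts \<nu> \<in> M1"
  by (induction ts arbitrary: \<nu>) (auto simp: Qiter_def Qavg_in_M1)

lemma measure_Qavg_Qiter_diff_le:
  assumes \<mu>: "\<mu> \<in> M1" and T: "T > 0" and B: "B \<in> sets borel" and ts: "\<forall>t\<in>set ts. t > 0"
  shows "\<bar>measure (Qavg K T (Qiter K ts \<mu>)) B - measure (Qavg K T \<mu>) B\<bar> \<le> sum_list ts / T"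
  using ts
proof (induction ts rule: rev_induct)
  case Nil
  then show ?case by (simp add: Qiter_def)
next
  case (snoc t ts)
  have "\<bar>measure (Qavg K T (Qavg K t (Qiter K ts \<mu>))) B - measure (Qavg K T (Qiter K ts \<mu>)) B\<bar> \<le> t / T"
    using snoc.prems by (intro measure_Qavg_Qavg_diff_le[OF Qiter_in_M1[OF \<mu>] _ T B]) auto
  with snoc show ?case
    by (simp add: Qiter_def add_divide_distrib)
qed

lemma SUP_tv_norm_Qavg_Qiter_bounds:
  assumes ts: "\<forall>t\<in>set ts. t > 0" and T: "T > 0"
  shows "0 \<le> (SUP \<mu>\<in>M1. ereal (tv_norm (Qavg K T (Qiter K ts \<mu>)) (Qavg K T \<mu>)))"
    and "(SUP \<mu>\<in>M1. ereal (tv_norm (Qavg K T (Qiter K ts \<mu>)) (Qavg K T \<mu>))) \<le> ereal (2 * sum_list ts / T)"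
proof -
  note diff_le = measure_Qavg_Qiter_diff_le[OF _ T _ ts]
  have some_M1: "return borel undefined \<in> M1"
    by (auto simp: M1_def intro: prob_space_return)
  from tv_norm_nonneg[OF diff_le[OF some_M1]]
  show "0 \<le> (SUP \<mu>\<in>M1. ereal (tv_norm (Qavg K T (Qiter K ts \<mu>)) (Qavg K T \<mu>)))"
    by (intro SUP_upper2[OF some_M1]) simp
  show "(SUP \<mu>\<in>M1. ereal (tv_norm (Qavg K T (Qiter K ts \<mu>)) (Qavg K T \<mu>))) \<le> ereal (2 * sum_list ts / T)"
  proof (rule SUP_least)
    fix \<mu> :: "'a measure"
    assume "\<mu> \<in> M1"
    from tv_norm_le[OF diff_le[OF this]]
    show "ereal (tv_norm (Qavg K T (Qiter K ts \<mu>)) (Qavg K T \<mu>)) \<le> ereal (2 * sum_list ts / T)"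
      by simp
  qed
qed

end

theorem lemma2:
  fixes K :: "real \<Rightarrow> 'a::polish_space \<Rightarrow> 'a measure"
    and ts :: "real list"
  assumes "transition_semigroup K" and "feller K" and "stoch_continuous K"
    and "ts \<noteq> []" and "\<forall>t\<in>set ts. t > 0"
  shows "Limsup at_top (\<lambda>T::real. SUP \<mu>\<in>M1. ereal (tv_norm (Qavg K T (Qiter K ts \<mu>)) (Qavg K T \<mu>))) = 0"
proof -
  interpret markov_semigroup K
    using assms(1,3) by unfold_locales
  define F where "F T = (SUP \<mu>\<in>M1. ereal (tv_norm (Qavg K T (Qiter K ts \<mu>)) (Qavg K T \<mu>)))" for T
  have "((\<lambda>T::real. 2 * sum_list ts / T) \<longlongrightarrow> 0) at_top"
    by (intro tendsto_divide_0[OF tendsto_const] filterlim_at_top_imp_at_infinity filterlim_ident)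
  from tendsto_ereal[OF this] have upper: "((\<lambda>T. ereal (2 * sum_list ts / T)) \<longlongrightarrow> 0) at_top"
    by (simp add: zero_ereal_def)
  have "eventually (\<lambda>T. 0 \<le> F T) at_top"
    by (rule eventually_mono[OF eventually_gt_at_top[of 0]])
      (unfold F_def, rule SUP_tv_norm_Qavg_Qiter_bounds(1)[OF assms(5)])
  moreover have "eventually (\<lambda>T. F T \<le> ereal (2 * sum_list ts / T)) at_top"
    by (rule eventually_mono[OF eventually_gt_at_top[of 0]])
      (unfold F_def, rule SUP_tv_norm_Qavg_Qiter_bounds(2)[OF assms(5)])
  ultimately have "(F \<longlongrightarrow> 0) at_top"
    using upper
    by (rule tendsto_sandwich[where f="\<lambda>_. 0", OF _ _ tendsto_const])
  then have "Limsup at_top F = 0"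
    by (intro lim_imp_Limsup) simp
  then show ?thesis
    unfolding F_def[abs_def] .
qed

end
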